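(* Every twisted net with $n$ vertices has at least $2^{n/18+2/3}$ perfect matchings.
   Context: In a graph with all degrees $2$ or $3$, the degree-two vertices are corners; for a graph consisting of a single edge, both its ends are corners. Twisted nets are defined inductively: a $4$-cycle is a twisted net; if $T$ is a twisted net and $H$ is (disjoint from $T$) either a twisted net or a single edge, then the graph obtained from $T\cup H$ by adding edges $uv$ and $u'v'$, where $u\neq u'$ are corners of $T$ and $v\ne v'$ are corners of $H$, is a twisted net. Every twisted net has exactly four corners. *)

theory Defs
  imports Complex_Main
begin

text \<open>Graphs are pairs (V, E) with E a set of 2-element subsets of V.
  A corner of a graph with all degrees 2 or 3 is a vertex of degree 2.\<close>

definition degree :: "'a set set \<Rightarrow> 'a \<Rightarrow> nat" where
  "degree E x = card {e \<in> E. x \<in> e}"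

definition corner :: "'a set \<Rightarrow> 'a set set \<Rightarrow> 'a \<Rightarrow> bool" where
  "corner V E x \<longleftrightarrow> x \<in> V \<and> degree E x = 2"

inductive twisted_net :: "'a set \<Rightarrow> 'a set set \<Rightarrow> bool" where
  cycle4: "distinct [a, b, c, d] \<Longrightarrow>
     twisted_net {a, b, c, d} {{a, b}, {b, c}, {c, d}, {d, a}}"
| join_net: "twisted_net V1 E1 \<Longrightarrow> twisted_net V2 E2 \<Longrightarrow> V1 \<inter> V2 = {} \<Longrightarrow>
     corner V1 E1 u \<Longrightarrow> corner V1 E1 u' \<Longrightarrow> u \<noteq> u' \<Longrightarrow>
     corner V2 E2 v \<Longrightarrow> corner V2 E2 v' \<Longrightarrow> v \<noteq> v' \<Longrightarrow>
     twisted_net (V1 \<union> V2) (E1 \<union> E2 \<union> {{u, v}, {u', v'}})"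
| join_edge: "twisted_net V1 E1 \<Longrightarrow> x \<noteq> y \<Longrightarrow> x \<notin> V1 \<Longrightarrow> y \<notin> V1 \<Longrightarrow>
     corner V1 E1 u \<Longrightarrow> corner V1 E1 u' \<Longrightarrow> u \<noteq> u' \<Longrightarrow>
     twisted_net (V1 \<union> {x, y}) (E1 \<union> {{x, y}} \<union> {{u, x}, {u', y}})"

definition perfect_matching :: "'a set \<Rightarrow> 'a set set \<Rightarrow> 'a set set \<Rightarrow> bool" where
  "perfect_matching V E M \<longleftrightarrow> M \<subseteq> E \<and> (\<forall>x\<in>V. \<exists>!e. e \<in> M \<and> x \<in> e)"

end

theory Submission
  imports Defs
begin

(* Write bound n = 2 powr (n/18 + 2/3) and growth = 2 powr (1/9); then
   bound (n + 2) = growth * bound n and bound n1 * bound n2 = 2 powr (2/3) * bound (n1 + n2).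
   The proof is an induction over the construction of twisted nets with a strengthened
   hypothesis.  For a set F of vertex pairs, the potential of a graph is its number of perfect
   matchings plus, for every pair in F, the number of perfect matchings of the graph with that
   pair deleted.  Every twisted net has at most four corners and is either a 4-cycle or has,
   for every set F of corner pairs, potential at least growth ^ card F * bound (card V).
   - Gluing two nets at least multiplies the matching counts, which yields a spare factor
     2 powr (2/3) >= growth ^ 6, enough for every set of at most six corner pairs.
   - Gluing an edge xy at corners u, u' of a net: pairs through x or y are folded into pairs
     through u' or u, and the pair uu' is added; the potential of the old net at the folded set
     is dominated by the new potential, which gains the needed factor growth.
   - Gluing an edge to a 4-cycle is checked by counting matchings explicitly. *)

definition growth :: real where
  "growth = 2 powr (1/9)"

definition bound :: "nat \<Rightarrow> real" where
  "bound n = 2 powr (real n / 18 + 2/3)"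

lemma bound_pos: "0 < bound n"
  by (simp add: bound_def)

lemma growth_power: "growth ^ k = 2 powr (real k / 9)"
  unfolding growth_def by (subst powr_power) auto

lemma growth_ge_1: "1 \<le> growth"
  unfolding growth_def by (rule ge_one_powr_ge_zero) auto

lemma bound_step: "bound (n + 2) = growth * bound n"
  unfolding bound_def growth_def by (simp add: powr_add[symmetric] field_simps)

lemma bound_add: "bound m * bound n = 2 powr (2/3) * bound (m + n)"
  unfolding bound_def powr_add[symmetric]
  by (rule arg_cong[where f="\<lambda>t. 2 powr t"]) (simp add: field_simps)

lemma bound_4: "bound 4 \<le> 2"
proof -
  have "bound 4 = 2 powr (8/9)" by (simp add: bound_def)
  also have "\<dots> \<le> 2 powr 1" by (rule powr_mono) auto
  finally show ?thesis by simp
qed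

lemma bound_6: "bound 6 = 2"
  by (simp add: bound_def)

lemma two_powr_two_thirds: "2 powr (2/3::real) \<le> 2"
proof -
  have "2 powr (2/3::real) \<le> 2 powr 1" by (rule powr_mono) auto
  thus ?thesis by simp
qed

lemma growth_power_le: "k \<le> 6 \<Longrightarrow> growth ^ k \<le> 2 powr (2/3)"
  unfolding growth_power by (auto simp: field_simps)

lemma growth_power_le_2: "k \<le> 6 \<Longrightarrow> growth ^ k \<le> 2"
  using growth_power_le two_powr_two_thirds by (meson order_trans)

lemma growth_sq_le: "growth ^ 2 \<le> 3/2"
proof -
  have "(growth ^ 2) ^ 9 = (growth ^ 9) ^ 2" by (simp flip: power_mult add: mult.commute)
  also have "\<dots> = 4" using growth_power[of 9] by simp
  also have "\<dots> \<le> (3/2) ^ 9" by (simp add: eval_nat_numeral)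
  finally show ?thesis by (subst (asm) power_mono_iff) auto
qed

text \<open>The three numerical inequalities driving the induction: growth by one
  factor is paid for by one extra summand, and the base cases for the 4-cycle.\<close>

lemma growth_step:
  assumes "k \<le> 6"
  shows "growth ^ (k + 1) \<le> 1 + growth ^ k"
proof -
  have "growth ^ k \<le> 2" using growth_power_le_2[OF assms] .
  moreover have "growth - 1 \<le> 1/2"
  proof -
    have "growth * 1 \<le> growth * growth" using growth_ge_1 by (intro mult_left_mono) auto
    thus ?thesis using growth_sq_le by (simp add: power2_eq_square)
  qed
  moreover have "0 \<le> growth - 1" using growth_ge_1 by simp
  ultimately have "growth ^ k * (growth - 1) \<le> 2 * (1/2)"
    by (intro mult_mono) auto
  thus ?thesis by (simp add: algebra_simps)
qed

lemma growth_cycle_adjacent: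
  assumes "k \<le> 6"
  shows "2 * growth ^ k \<le> max 3 (real k + 1)"
proof (cases "k \<le> 2")
  case True
  hence "growth ^ k \<le> growth ^ 2" using growth_ge_1 by (rule_tac power_increasing) auto
  thus ?thesis using growth_sq_le by simp
next
  case False
  have "growth ^ k \<le> 2" using growth_power_le_2[OF assms] .
  thus ?thesis using False by simp
qed

lemma growth_cycle_opposite: "k \<le> 6 \<Longrightarrow> 2 * growth ^ k \<le> 2 + real k"
  using growth_cycle_adjacent[of k] by (cases "k = 0") auto

text \<open>Perfect matchings of the graph with vertex set \<open>W\<close> whose edges are the
  members of \<open>E\<close> lying inside \<open>W\<close>. Counting them for subsets \<open>W\<close> of a vertex set
  lets us compare matchings of a graph with matchings of its vertex-deleted
  subgraphs.\<close>

definition matchings_on :: "'a set set \<Rightarrow> 'a set \<Rightarrow> 'a set set set" where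
  "matchings_on E W = {M. M \<subseteq> E \<and> \<Union>M \<subseteq> W \<and> (\<forall>x\<in>W. \<exists>!e. e \<in> M \<and> x \<in> e)}"

definition num_matchings :: "'a set set \<Rightarrow> 'a set \<Rightarrow> nat" where
  "num_matchings E W = card (matchings_on E W)"

lemma finite_matchings_on: "finite E \<Longrightarrow> finite (matchings_on E W)"
  by (rule finite_subset[of _ "Pow E"]) (auto simp: matchings_on_def)

lemma matchings_on_mono: "E1 \<subseteq> E2 \<Longrightarrow> matchings_on E1 W \<subseteq> matchings_on E2 W"
  by (auto simp: matchings_on_def)

lemma num_matchings_mono: "E1 \<subseteq> E2 \<Longrightarrow> finite E2 \<Longrightarrow> num_matchings E1 W \<le> num_matchings E2 W"
  unfolding num_matchings_def by (intro card_mono finite_matchings_on matchings_on_mono)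

lemma matching_edge_subset: "M \<in> matchings_on E W \<Longrightarrow> e \<in> M \<Longrightarrow> e \<subseteq> W"
  by (auto simp: matchings_on_def)

lemma matchings_on_edge: "{a, b} \<in> E \<Longrightarrow> {{a, b}} \<in> matchings_on E {a, b}"
  by (auto simp: matchings_on_def)

lemma num_matchings_empty: "finite E \<Longrightarrow> 1 \<le> num_matchings E {}"
  unfolding num_matchings_def
  using finite_matchings_on[of E "{}"] card_0_eq[of "matchings_on E {}"]
  by (fastforce simp: matchings_on_def)

lemma num_matchings_edge: "{a, b} \<in> E \<Longrightarrow> finite E \<Longrightarrow> 1 \<le> num_matchings E {a, b}"
  unfolding num_matchings_def using matchings_on_edge[of a b E] finite_matchings_on[of E "{a, b}"]
  by (metis One_nat_def Suc_leI card_gt_0_iff empty_iff)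

lemma matchings_on_union:
  assumes M1: "M1 \<in> matchings_on E W1" and M2: "M2 \<in> matchings_on E W2" and disj: "W1 \<inter> W2 = {}"
  shows "M1 \<union> M2 \<in> matchings_on E (W1 \<union> W2)"
proof -
  have "\<exists>!e. e \<in> M1 \<union> M2 \<and> x \<in> e" if x: "x \<in> W1 \<union> W2" for x
  proof (cases "x \<in> W1")
    case True
    hence "\<exists>!e. e \<in> M1 \<and> x \<in> e" and "\<forall>e\<in>M2. x \<notin> e"
      using M1 M2 disj by (auto simp: matchings_on_def)
    thus ?thesis by blast
  next
    case False
    hence "\<exists>!e. e \<in> M2 \<and> x \<in> e" and "\<forall>e\<in>M1. x \<notin> e"
      using x M1 M2 by (auto simp: matchings_on_def)
    thus ?thesis by blast
  qed
  thus ?thesis using M1 M2 by (auto simp: matchings_on_def)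
qed

lemma extend_matchings:
  assumes sub: "E \<subseteq> E'" and N: "N \<in> matchings_on E' U" and ne: "{} \<notin> N" and disj: "W \<inter> U = {}"
  shows "inj_on (\<lambda>M. M \<union> N) (matchings_on E W)"
    and "(\<lambda>M. M \<union> N) ` matchings_on E W \<subseteq> matchings_on E' (W \<union> U)"
proof -
  have apart: "M \<inter> N = {}" if M: "M \<in> matchings_on E W" for M
  proof -
    have "e = {}" if "e \<in> M" "e \<in> N" for e
      using matching_edge_subset[OF M that(1)] matching_edge_subset[OF N that(2)] disj by blast
    thus ?thesis using ne by blast
  qed
  show "inj_on (\<lambda>M. M \<union> N) (matchings_on E W)"
  proof (rule inj_onI)
    fix M M' assume "M \<in> matchings_on E W" "M' \<in> matchings_on E W" "M \<union> N = M' \<union> N"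
    thus "M = M'" using apart by blast
  qed
  show "(\<lambda>M. M \<union> N) ` matchings_on E W \<subseteq> matchings_on E' (W \<union> U)"
  proof clarify
    fix M assume "M \<in> matchings_on E W"
    hence "M \<in> matchings_on E' W" using matchings_on_mono[OF sub] by blast
    thus "M \<union> N \<in> matchings_on E' (W \<union> U)" using N disj by (rule matchings_on_union)
  qed
qed

text \<open>Attaching a pendant edge \<open>ab\<close> at \<open>a\<close>: matchings avoiding \<open>a\<close> extend by \<open>ab\<close>.\<close>

lemma num_matchings_add_edge:
  assumes fin: "finite E'" and sub: "E \<subseteq> E'" and ab: "{a, b} \<in> E'"
    and a: "a \<in> W" and b: "b \<notin> W"
  shows "num_matchings E (W - {a}) \<le> num_matchings E' (W \<union> {b})"
proof -
  have "{{a, b}} \<in> matchings_on E' {a, b}" "{} \<notin> {{a, b}}" "(W - {a}) \<inter> {a, b} = {}"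
    using matchings_on_edge[OF ab] b by auto
  note ext = extend_matchings[OF sub this]
  have "num_matchings E (W - {a}) \<le> num_matchings E' ((W - {a}) \<union> {a, b})"
    unfolding num_matchings_def by (rule card_inj_on_le[OF ext finite_matchings_on[OF fin]])
  moreover have "(W - {a}) \<union> {a, b} = W \<union> {b}" using a by auto
  ultimately show ?thesis by simp
qed

text \<open>Attaching a path \<open>u x y u'\<close> through two new vertices \<open>x, y\<close>: a matching
  of \<open>W\<close> extends by \<open>xy\<close>, and a matching of \<open>W - {u, u'}\<close> extends by \<open>ux, u'y\<close>;
  the two kinds of extensions are distinct.\<close>

lemma num_matchings_add_path:
  assumes fin: "finite E'" and sub: "E \<subseteq> E'"
    and exy: "{x, y} \<in> E'" and eux: "{u, x} \<in> E'" and euy: "{u', y} \<in> E'"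
    and u: "u \<in> W" and u': "u' \<in> W" and x: "x \<notin> W" and y: "y \<notin> W" and xy: "x \<noteq> y"
    and uu': "u \<noteq> u'"
  shows "num_matchings E W + num_matchings E (W - {u, u'}) \<le> num_matchings E' (W \<union> {x, y})"
proof -
  let ?A = "matchings_on E W" and ?B = "matchings_on E (W - {u, u'})"
    and ?T = "matchings_on E' (W \<union> {x, y})"
  let ?f = "\<lambda>M. M \<union> {{x, y}}" and ?g = "\<lambda>M. M \<union> ({{u, x}} \<union> {{u', y}})"
  have finE: "finite E" using finite_subset[OF sub fin] .
  have "{{x, y}} \<in> matchings_on E' {x, y}" "{} \<notin> {{x, y}}" "W \<inter> {x, y} = {}"
    using matchings_on_edge[OF exy] x y by auto
  note ext_f = extend_matchings[OF sub this]
  have N: "{{u, x}} \<union> {{u', y}} \<in> matchings_on E' ({u, x} \<union> {u', y})"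
    using matchings_on_edge[OF eux] matchings_on_edge[OF euy] u u' x y xy uu'
    by (rule_tac matchings_on_union) auto
  have "{} \<notin> {{u, x}} \<union> {{u', y}}" "(W - {u, u'}) \<inter> ({u, x} \<union> {u', y}) = {}"
    using x y by auto
  note ext_g = extend_matchings[OF sub N this]
  have "(W - {u, u'}) \<union> ({u, x} \<union> {u', y}) = W \<union> {x, y}" using u u' by auto
  hence g_into: "?g ` ?B \<subseteq> ?T" using ext_g(2) by simp
  have disjoint: "?f ` ?A \<inter> ?g ` ?B = {}"
  proof -
    have "{x, y} \<notin> ?g M" if "M \<in> ?B" for M
      using that matching_edge_subset[of M E "W - {u, u'}" "{x, y}"] u u' x y
      by (auto simp: doubleton_eq_iff)
    thus ?thesis by blast
  qed
  have "card ?A + card ?B = card (?f ` ?A \<union> ?g ` ?B)"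
    using disjoint ext_f(1) ext_g(1) finite_matchings_on[OF finE]
    by (simp add: card_Un_disjoint card_image)
  also have "\<dots> \<le> card ?T"
    using ext_f(2) g_into finite_matchings_on[OF fin] by (intro card_mono) auto
  finally show ?thesis unfolding num_matchings_def .
qed

text \<open>On disjoint vertex sets the matching counts multiply (at least): a pair of
  matchings is recovered from its union by splitting the edges by side.\<close>

lemma num_matchings_disjoint_union:
  assumes fin: "finite E" and sub1: "E1 \<subseteq> E" and sub2: "E2 \<subseteq> E"
    and disj: "W1 \<inter> W2 = {}" and ne1: "{} \<notin> E1" and ne2: "{} \<notin> E2"
  shows "num_matchings E1 W1 * num_matchings E2 W2 \<le> num_matchings E (W1 \<union> W2)"
proof -
  let ?P = "matchings_on E1 W1 \<times> matchings_on E2 W2"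
  have inj: "inj_on (\<lambda>(M1, M2). M1 \<union> M2) ?P"
  proof (rule inj_onI, clarify)
    fix M1 M2 N1 N2
    assume "M1 \<in> matchings_on E1 W1" "M2 \<in> matchings_on E2 W2"
      "N1 \<in> matchings_on E1 W1" "N2 \<in> matchings_on E2 W2" and eq: "M1 \<union> M2 = N1 \<union> N2"
    hence in1: "\<And>e. e \<in> M1 \<union> N1 \<Longrightarrow> e \<subseteq> W1 \<and> e \<noteq> {}"
      and in2: "\<And>e. e \<in> M2 \<union> N2 \<Longrightarrow> e \<subseteq> W2 \<and> e \<noteq> {}"
      using ne1 ne2 by (auto simp: matchings_on_def)
    have "M1 = {e \<in> M1 \<union> M2. e \<subseteq> W1}" "N1 = {e \<in> N1 \<union> N2. e \<subseteq> W1}"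
      "M2 = {e \<in> M1 \<union> M2. e \<subseteq> W2}" "N2 = {e \<in> N1 \<union> N2. e \<subseteq> W2}"
      using in1 in2 disj by blast+
    thus "M1 = N1 \<and> M2 = N2" using eq by metis
  qed
  have into: "(\<lambda>(M1, M2). M1 \<union> M2) ` ?P \<subseteq> matchings_on E (W1 \<union> W2)"
    using matchings_on_mono[OF sub1] matchings_on_mono[OF sub2] disj
    by (auto intro!: matchings_on_union)
  have "card ?P \<le> card (matchings_on E (W1 \<union> W2))"
    using card_inj_on_le[OF inj into finite_matchings_on[OF fin]] .
  thus ?thesis unfolding num_matchings_def by (simp add: card_cartesian_product)
qed

definition graph :: "'a set \<Rightarrow> 'a set set \<Rightarrow> bool" where
  "graph V E \<longleftrightarrow> finite V \<and> (\<forall>e\<in>E. e \<subseteq> V \<and> card e = 2)"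

definition corners :: "'a set \<Rightarrow> 'a set set \<Rightarrow> 'a set" where
  "corners V E = {z. corner V E z}"

definition pairs :: "'a set \<Rightarrow> 'a set set" where
  "pairs C = {e. e \<subseteq> C \<and> card e = 2}"

lemma graph_finite_edges: "graph V E \<Longrightarrow> finite E"
  unfolding graph_def by (rule finite_subset[of _ "Pow V"]) auto

lemma graph_no_empty_edge: "graph V E \<Longrightarrow> {} \<notin> E"
  unfolding graph_def by force

lemma corners_subset: "corners V E \<subseteq> V"
  unfolding corners_def corner_def by auto

lemma finite_corners: "graph V E \<Longrightarrow> finite (corners V E)"
  unfolding graph_def using finite_subset[OF corners_subset] by blast

lemma finite_pairs: "finite C \<Longrightarrow> finite (pairs C)"
  unfolding pairs_def by (rule finite_subset[of _ "Pow C"]) auto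

lemma pairs_mono: "A \<subseteq> B \<Longrightarrow> pairs A \<subseteq> pairs B"
  unfolding pairs_def by auto

lemma card_pairs_le_6:
  assumes fin: "finite C" and C: "card C \<le> 4" and F: "F \<subseteq> pairs C"
  shows "card F \<le> 6"
proof -
  have "card F \<le> card (pairs C)" using F finite_pairs[OF fin] by (rule card_mono[rotated])
  also have "\<dots> = card C choose 2" unfolding pairs_def using n_subsets[OF fin] by simp
  also have "\<dots> \<le> 4 choose 2" using C by (rule binomial_right_mono)
  also have "\<dots> = 6" by (simp add: choose_two)
  finally show ?thesis .
qed

lemma card_diff_two_corners:
  assumes "finite C" "card C \<le> 4" "u \<in> C" "u' \<in> C" "u \<noteq> u'"
  shows "card (C - {u, u'}) \<le> 2"
  using assms card_Diff_subset[of "{u, u'}" C] by auto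

lemma degree_split:
  assumes fin: "finite E'" and sub: "E \<subseteq> E'"
  shows "degree E' z = degree E z + degree (E' - E) z"
proof -
  let ?old = "{e \<in> E. z \<in> e}" and ?new = "{e \<in> E' - E. z \<in> e}"
  have "{e \<in> E'. z \<in> e} = ?old \<union> ?new" using sub by blast
  moreover have "finite ?old" using finite_subset[OF sub fin] by simp
  moreover have "finite ?new" using fin by simp
  ultimately have "card {e \<in> E'. z \<in> e} = card ?old + card ?new"
    by (simp add: card_Un_disjoint disjoint_iff)
  thus ?thesis unfolding degree_def .
qed

lemma corners_after_gluing:
  assumes fin: "finite E'" and sub: "E \<subseteq> E'"
    and u: "corner V E u" and u': "corner V E u'"
    and at_u: "\<exists>e\<in>E' - E. u \<in> e" and at_u': "\<exists>e\<in>E' - E. u' \<in> e"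
    and new_edges: "\<forall>e\<in>E' - E. e \<inter> V \<subseteq> {u, u'}"
    and z: "z \<in> V" and deg: "degree E' z = 2"
  shows "z \<in> corners V E - {u, u'}"
proof -
  have split: "degree E' z = degree E z + degree (E' - E) z" by (rule degree_split[OF fin sub])
  show ?thesis
  proof (cases "z \<in> {u, u'}")
    case True
    hence "degree E z = 2" using u u' by (auto simp: corner_def)
    moreover obtain e where "e \<in> E' - E" "z \<in> e" using True at_u at_u' by blast
    hence "{e \<in> E' - E. z \<in> e} \<noteq> {}" by blast
    hence "degree (E' - E) z > 0" using fin unfolding degree_def by (simp add: card_gt_0_iff)
    ultimately have False using split deg by linarith
    thus ?thesis by blast
  next
    case False
    hence "{e \<in> E' - E. z \<in> e} = {}" using new_edges z by blast
    hence "degree (E' - E) z = 0" unfolding degree_def by (simp only: card.empty)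
    hence "degree E z = 2" using split deg by linarith
    thus ?thesis using z False unfolding corners_def corner_def by blast
  qed
qed

lemma graph_join_net:
  assumes "graph V1 E1" "graph V2 E2" "V1 \<inter> V2 = {}"
    and "u \<in> V1" "u' \<in> V1" "v \<in> V2" "v' \<in> V2"
  shows "graph (V1 \<union> V2) (E1 \<union> E2 \<union> {{u, v}, {u', v'}})"
proof -
  have "u \<noteq> v" "u' \<noteq> v'" using assms(3-7) by blast+
  thus ?thesis using assms(1,2,4-7) by (auto simp: graph_def)
qed

lemma graph_join_edge:
  assumes "graph V1 E1" "x \<notin> V1" "y \<notin> V1" "x \<noteq> y" "u \<in> V1" "u' \<in> V1"
  shows "graph (V1 \<union> {x, y}) (E1 \<union> {{x, y}} \<union> {{u, x}, {u', y}})"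
  using assms by (auto simp: graph_def card_insert_if)

lemma corners_join_net:
  assumes g1: "graph V1 E1" and g2: "graph V2 E2" and disj: "V1 \<inter> V2 = {}"
    and u: "corner V1 E1 u" and u': "corner V1 E1 u'"
    and v: "corner V2 E2 v" and v': "corner V2 E2 v'"
  shows "corners (V1 \<union> V2) (E1 \<union> E2 \<union> {{u, v}, {u', v'}})
           \<subseteq> (corners V1 E1 - {u, u'}) \<union> (corners V2 E2 - {v, v'})"
proof
  let ?E = "E1 \<union> E2 \<union> {{u, v}, {u', v'}}"
  have in_V: "u \<in> V1" "u' \<in> V1" "v \<in> V2" "v' \<in> V2"
    using u u' v v' by (auto simp: corner_def)
  have fin: "finite ?E" using graph_finite_edges[OF graph_join_net[OF g1 g2 disj in_V]] .
  have E1: "e \<subseteq> V1" if "e \<in> E1" for e using g1 that by (simp add: graph_def)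
  have E2: "e \<subseteq> V2" if "e \<in> E2" for e using g2 that by (simp add: graph_def)
  have outside: "v \<notin> V1" "v' \<notin> V1" "u \<notin> V2" "u' \<notin> V2" using in_V disj by blast+
  have glue1: "E1 \<subseteq> ?E" "\<exists>e\<in>?E - E1. u \<in> e" "\<exists>e\<in>?E - E1. u' \<in> e"
      "\<forall>e\<in>?E - E1. e \<inter> V1 \<subseteq> {u, u'}"
    using outside E1 E2 disj by auto
  have glue2: "E2 \<subseteq> ?E" "\<exists>e\<in>?E - E2. v \<in> e" "\<exists>e\<in>?E - E2. v' \<in> e"
      "\<forall>e\<in>?E - E2. e \<inter> V2 \<subseteq> {v, v'}"
    using outside E1 E2 disj by auto
  fix z assume "z \<in> corners (V1 \<union> V2) ?E"
  hence z: "z \<in> V1 \<union> V2" "degree ?E z = 2" by (auto simp: corners_def corner_def)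
  show "z \<in> (corners V1 E1 - {u, u'}) \<union> (corners V2 E2 - {v, v'})"
  proof (cases "z \<in> V1")
    case True
    have "z \<in> corners V1 E1 - {u, u'}"
      by (rule corners_after_gluing[OF fin glue1(1) u u' glue1(2-4) True z(2)])
    thus ?thesis by blast
  next
    case False
    hence "z \<in> V2" using z(1) by blast
    have "z \<in> corners V2 E2 - {v, v'}"
      by (rule corners_after_gluing[OF fin glue2(1) v v' glue2(2-4) \<open>z \<in> V2\<close> z(2)])
    thus ?thesis by blast
  qed
qed

lemma corners_join_edge:
  assumes g1: "graph V1 E1" and x: "x \<notin> V1" and y: "y \<notin> V1" and xy: "x \<noteq> y"
    and u: "corner V1 E1 u" and u': "corner V1 E1 u'"
  shows "corners (V1 \<union> {x, y}) (E1 \<union> {{x, y}} \<union> {{u, x}, {u', y}})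
           \<subseteq> {x, y} \<union> (corners V1 E1 - {u, u'})"
proof
  let ?E = "E1 \<union> {{x, y}} \<union> {{u, x}, {u', y}}"
  have in_V: "u \<in> V1" "u' \<in> V1" using u u' by (auto simp: corner_def)
  have fin: "finite ?E" using graph_finite_edges[OF graph_join_edge[OF g1 x y xy in_V]] .
  have E1: "e \<subseteq> V1" if "e \<in> E1" for e using g1 that by (simp add: graph_def)
  have "{u, x} \<notin> E1" "{u', y} \<notin> E1" using E1 x y by blast+
  hence ux: "{u, x} \<in> ?E - E1" and u'y: "{u', y} \<in> ?E - E1" by simp_all
  have at: "\<exists>e\<in>?E - E1. u \<in> e" "\<exists>e\<in>?E - E1. u' \<in> e"
    using bexI[OF _ ux, of "\<lambda>e. u \<in> e"] bexI[OF _ u'y, of "\<lambda>e. u' \<in> e"] by simp_all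
  have new: "\<forall>e\<in>?E - E1. e \<inter> V1 \<subseteq> {u, u'}" using x y by auto
  fix z assume "z \<in> corners (V1 \<union> {x, y}) ?E"
  hence z: "z \<in> V1 \<union> {x, y}" "degree ?E z = 2" by (auto simp: corners_def corner_def)
  show "z \<in> {x, y} \<union> (corners V1 E1 - {u, u'})"
  proof (cases "z \<in> V1")
    case True
    have "z \<in> corners V1 E1 - {u, u'}"
      by (rule corners_after_gluing[OF fin _ u u' at new True z(2)]) blast
    thus ?thesis by blast
  next
    case False
    thus ?thesis using z(1) by blast
  qed
qed

text \<open>Bounding the potential for all
  sets of corner pairs is the strengthened induction hypothesis.\<close>

definition potential :: "'a set \<Rightarrow> 'a set set \<Rightarrow> 'a set set \<Rightarrow> real" where
  "potential V E F = real (num_matchings E V) + (\<Sum>e\<in>F. real (num_matchings E (V - e)))"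

lemma num_matchings_le_potential: "real (num_matchings E V) \<le> potential V E F"
  unfolding potential_def by (simp add: sum_nonneg)

locale edge_join =
  fixes V1 :: "'a set" and E1 :: "'a set set" and x y u u' :: 'a
  assumes graph: "graph V1 E1" and x: "x \<notin> V1" and y: "y \<notin> V1" and xy: "x \<noteq> y"
    and u: "u \<in> V1" and u': "u' \<in> V1" and uu': "u \<noteq> u'"
begin

abbreviation "V' \<equiv> V1 \<union> {x, y}"
abbreviation "E' \<equiv> E1 \<union> {{x, y}} \<union> {{u, x}, {u', y}}"

lemma finite_E': "finite E'"
  using graph_finite_edges[OF graph] by simp

lemma E1_subset: "E1 \<subseteq> E'"
  by auto

lemma num_matchings_join:
  "num_matchings E1 V1 + num_matchings E1 (V1 - {u, u'}) \<le> num_matchings E' V'"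
  by (rule num_matchings_add_path[OF finite_E' E1_subset]) (use x y xy u u' uu' in auto)

lemma num_matchings_without_x:
  assumes "w \<in> V1" "w \<noteq> u'"
  shows "num_matchings E1 (V1 - {w, u'}) \<le> num_matchings E' (V' - {x, w})"
proof -
  have "num_matchings E1 ((V1 - {w}) - {u'}) \<le> num_matchings E' ((V1 - {w}) \<union> {y})"
    by (rule num_matchings_add_edge[OF finite_E' E1_subset]) (use y u' assms in auto)
  moreover have "(V1 - {w}) - {u'} = V1 - {w, u'}" by auto
  moreover have "(V1 - {w}) \<union> {y} = V' - {x, w}" using x y xy assms by auto
  ultimately show ?thesis by simp
qed

lemma num_matchings_without_y:
  assumes "w \<in> V1" "w \<noteq> u"
  shows "num_matchings E1 (V1 - {w, u}) \<le> num_matchings E' (V' - {y, w})"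
proof -
  have "num_matchings E1 ((V1 - {w}) - {u}) \<le> num_matchings E' ((V1 - {w}) \<union> {x})"
    by (rule num_matchings_add_edge[OF finite_E' E1_subset]) (use x u assms in auto)
  moreover have "(V1 - {w}) - {u} = V1 - {w, u}" by auto
  moreover have "(V1 - {w}) \<union> {x} = V' - {y, w}" using x y xy assms by auto
  ultimately show ?thesis by simp
qed

lemma num_matchings_without_old:
  assumes "e \<subseteq> V1 - {u, u'}"
  shows "num_matchings E1 (V1 - e) + num_matchings E1 (V1 - e - {u, u'}) \<le> num_matchings E' (V' - e)"
proof -
  have "num_matchings E1 (V1 - e) + num_matchings E1 ((V1 - e) - {u, u'})
      \<le> num_matchings E' ((V1 - e) \<union> {x, y})"
    by (rule num_matchings_add_path[OF finite_E' E1_subset]) (use x y xy u u' uu' assms in auto)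
  moreover have "(V1 - e) \<union> {x, y} = V' - e" using x y assms by auto
  ultimately show ?thesis by simp
qed

lemma num_matchings_without_xy: "num_matchings E1 V1 \<le> num_matchings E' (V' - {x, y})"
proof -
  have "V' - {x, y} = V1" using x y by auto
  thus ?thesis using num_matchings_mono[OF E1_subset finite_E'] by simp
qed

text \<open>Pairs of new corners are traded for pairs of old corners: \<open>x\<close> is replaced
  by \<open>u'\<close> and \<open>y\<close> by \<open>u\<close> (deleting \<open>x\<close> forces the edge \<open>u'y\<close>, and vice versa).\<close>

definition fold_pair :: "'a set \<Rightarrow> 'a set" where
  "fold_pair e = (if x \<in> e then insert u' (e - {x}) else if y \<in> e then insert u (e - {y}) else e)"

definition unfold_pair :: "'a set \<Rightarrow> 'a set" where
  "unfold_pair e = (if u' \<in> e then insert x (e - {u'}) else if u \<in> e then insert y (e - {u}) else e)"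

lemma fold_pair:
  assumes D: "D \<subseteq> V1 - {u, u'}" and e: "e \<in> pairs ({x, y} \<union> D)" and exy: "e \<noteq> {x, y}"
  shows "fold_pair e \<in> pairs ({u, u'} \<union> D) - {{u, u'}}"
    and "unfold_pair (fold_pair e) = e"
    and "num_matchings E1 (V1 - fold_pair e) \<le> num_matchings E' (V' - e)"
proof -
  have xD: "x \<notin> D" "y \<notin> D" "u \<notin> D" "u' \<notin> D" using D x y by auto
  obtain p q where pq: "e = {p, q}" "p \<noteq> q" "p \<in> {x, y} \<union> D" "q \<in> {x, y} \<union> D"
    using e by (auto simp: pairs_def card_2_iff)
  have "(\<exists>w\<in>D. e = {x, w}) \<or> (\<exists>w\<in>D. e = {y, w}) \<or> (e \<subseteq> D \<and> card e = 2)"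
    using pq exy by (auto simp: insert_commute)
  then consider (X) w where "w \<in> D" "e = {x, w}" | (Y) w where "w \<in> D" "e = {y, w}"
    | (Old) "e \<subseteq> D" "card e = 2"
    by blast
  hence "fold_pair e \<in> pairs ({u, u'} \<union> D) - {{u, u'}} \<and> unfold_pair (fold_pair e) = e
    \<and> num_matchings E1 (V1 - fold_pair e) \<le> num_matchings E' (V' - e)"
  proof cases
    case X
    have w: "w \<in> V1" "w \<noteq> u" "w \<noteq> u'" "w \<noteq> x" "w \<noteq> y" using X D x y by auto
    have fold: "fold_pair e = {u', w}" using X w by (auto simp: fold_pair_def)
    have "num_matchings E1 (V1 - fold_pair e) \<le> num_matchings E' (V' - e)"
      using num_matchings_without_x[of w] w fold X by (simp add: insert_commute)
    thus ?thesis using fold X w uu' by (auto simp: unfold_pair_def pairs_def doubleton_eq_iff)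
  next
    case Y
    have w: "w \<in> V1" "w \<noteq> u" "w \<noteq> u'" "w \<noteq> x" "w \<noteq> y" using Y D x y by auto
    have fold: "fold_pair e = {u, w}" using Y w xy by (auto simp: fold_pair_def)
    have "num_matchings E1 (V1 - fold_pair e) \<le> num_matchings E' (V' - e)"
      using num_matchings_without_y[of w] w fold Y by (simp add: insert_commute)
    thus ?thesis using fold Y w uu' by (auto simp: unfold_pair_def pairs_def doubleton_eq_iff)
  next
    case Old
    have "x \<notin> e" "y \<notin> e" "u \<notin> e" "u' \<notin> e" using Old xD by auto
    hence fold: "fold_pair e = e" and "unfold_pair e = e" by (simp_all add: fold_pair_def unfold_pair_def)
    moreover have "e \<subseteq> V1 - {u, u'}" using Old D by auto
    hence "num_matchings E1 (V1 - e) \<le> num_matchings E' (V' - e)"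
      using num_matchings_without_old[of e] by linarith
    ultimately show ?thesis using Old \<open>u \<notin> e\<close> by (auto simp: pairs_def)
  qed
  thus "fold_pair e \<in> pairs ({u, u'} \<union> D) - {{u, u'}}" "unfold_pair (fold_pair e) = e"
    "num_matchings E1 (V1 - fold_pair e) \<le> num_matchings E' (V' - e)"
    by auto
qed

lemma potential_transfer:
  assumes D: "D \<subseteq> V1 - {u, u'}" and F: "F \<subseteq> pairs ({x, y} \<union> D)"
  shows "\<exists>G \<subseteq> pairs ({u, u'} \<union> D). card G = card (F - {{x, y}}) + 1 \<and>
     potential V1 E1 G + (if {x, y} \<in> F then real (num_matchings E1 V1) else 0) \<le> potential V' E' F"
proof -
  define F0 where "F0 = F - {{x, y}}"
  define G where "G = insert {u, u'} (fold_pair ` F0)"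
  have "finite D" using finite_subset[OF D] graph unfolding graph_def by blast
  hence finF: "finite F" using finite_subset[OF F finite_pairs] by simp
  hence finF0: "finite F0" by (simp add: F0_def)
  have F0: "e \<in> pairs ({x, y} \<union> D)" "e \<noteq> {x, y}" if "e \<in> F0" for e
    using that F by (auto simp: F0_def)
  have inj: "inj_on fold_pair F0"
    by (rule inj_on_inverseI[where g=unfold_pair]) (use fold_pair(2)[OF D F0] in auto)
  have notin: "{u, u'} \<notin> fold_pair ` F0" using fold_pair(1)[OF D F0] by blast
  have "G \<subseteq> pairs ({u, u'} \<union> D)"
    unfolding G_def using fold_pair(1)[OF D F0] uu' by (auto simp: pairs_def)
  moreover have "card G = card F0 + 1"
    unfolding G_def using notin finF0 inj by (simp add: card_image)
  moreover have "potential V1 E1 G + (if {x, y} \<in> F then real (num_matchings E1 V1) else 0)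
      \<le> potential V' E' F"
  proof -
    have sum_G: "(\<Sum>e\<in>G. real (num_matchings E1 (V1 - e)))
        = real (num_matchings E1 (V1 - {u, u'})) + (\<Sum>e\<in>F0. real (num_matchings E1 (V1 - fold_pair e)))"
      unfolding G_def using notin finF0 inj by (simp add: sum.reindex)
    have sum_F0: "(\<Sum>e\<in>F0. real (num_matchings E1 (V1 - fold_pair e)))
        \<le> (\<Sum>e\<in>F0. real (num_matchings E' (V' - e)))"
      using fold_pair(3)[OF D F0] by (intro sum_mono) auto
    have sum_F: "(\<Sum>e\<in>F. real (num_matchings E' (V' - e)))
        = (if {x, y} \<in> F then real (num_matchings E' (V' - {x, y})) else 0)
          + (\<Sum>e\<in>F0. real (num_matchings E' (V' - e)))"
      unfolding F0_def using finF by (simp add: sum.remove)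
    show ?thesis
      using num_matchings_join num_matchings_without_xy sum_G sum_F0 sum_F
      unfolding potential_def by (auto split: if_splits)
  qed
  ultimately show ?thesis unfolding F0_def by blast
qed

end

definition four_cycle :: "'a \<Rightarrow> 'a \<Rightarrow> 'a \<Rightarrow> 'a \<Rightarrow> 'a set \<Rightarrow> 'a set set \<Rightarrow> bool" where
  "four_cycle a b c d V E \<longleftrightarrow>
     distinct [a, b, c, d] \<and> V = {a, b, c, d} \<and> E = {{a, b}, {b, c}, {c, d}, {d, a}}"

lemma four_cycle_rotate: "four_cycle a b c d V E \<Longrightarrow> four_cycle b c d a V E"
  unfolding four_cycle_def by (auto simp: insert_commute)

lemma four_cycle_reflect: "four_cycle a b c d V E \<Longrightarrow> four_cycle a d c b V E"
  unfolding four_cycle_def by (auto simp: insert_commute)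

lemma four_cycle_wlog:
  assumes c: "four_cycle a b c d V E" and u: "u \<in> V" and u': "u' \<in> V" and uu': "u \<noteq> u'"
  shows "\<exists>a' b' c' d'. four_cycle a' b' c' d' V E \<and> u = a' \<and> (u' = b' \<or> u' = c')"
proof -
  have r1: "four_cycle b c d a V E" using four_cycle_rotate[OF c] .
  have r2: "four_cycle c d a b V E" using four_cycle_rotate[OF r1] .
  have r3: "four_cycle d a b c V E" using four_cycle_rotate[OF r2] .
  note reflected = four_cycle_reflect[OF c] four_cycle_reflect[OF r1]
    four_cycle_reflect[OF r2] four_cycle_reflect[OF r3]
  have "V = {a, b, c, d}" using c by (simp add: four_cycle_def)
  thus ?thesis using u u' uu' c r1 r2 r3 reflected by blast
qed

lemma four_cycle_graph: "four_cycle a b c d V E \<Longrightarrow> graph V E"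
  unfolding four_cycle_def graph_def by (auto simp: card_insert_if)

lemma four_cycle_card: "four_cycle a b c d V E \<Longrightarrow> card V = 4"
  unfolding four_cycle_def by (auto simp: card_insert_if)

lemma four_cycle_num_matchings: assumes "four_cycle a b c d V E" shows "2 \<le> num_matchings E V"
proof -
  have fin: "finite E" using graph_finite_edges[OF four_cycle_graph[OF assms]] .
  have d: "distinct [a, b, c, d]" and V: "V = {a, b, c, d}" and E: "E = {{a, b}, {b, c}, {c, d}, {d, a}}"
    using assms by (auto simp: four_cycle_def)
  have "{{a, b}} \<union> {{c, d}} \<in> matchings_on E ({a, b} \<union> {c, d})"
    by (rule matchings_on_union) (use d E in \<open>auto intro: matchings_on_edge\<close>)
  moreover have "{{b, c}} \<union> {{d, a}} \<in> matchings_on E ({b, c} \<union> {d, a})"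
    by (rule matchings_on_union) (use d E in \<open>auto intro: matchings_on_edge\<close>)
  moreover have "{a, b} \<union> {c, d} = V" "{b, c} \<union> {d, a} = V" using V by auto
  moreover have "{{a, b}} \<union> {{c, d}} = {{a, b}, {c, d}}" "{{b, c}} \<union> {{d, a}} = {{b, c}, {d, a}}"
    by auto
  ultimately have "{{{a, b}, {c, d}}, {{b, c}, {d, a}}} \<subseteq> matchings_on E V" by simp
  hence "card {{{a, b}, {c, d}}, {{b, c}, {d, a}}} \<le> num_matchings E V"
    unfolding num_matchings_def using finite_matchings_on[OF fin] by (rule card_mono[rotated])
  moreover have "{{a, b}, {c, d}} \<noteq> {{b, c}, {d, a}}" using d by (auto simp: doubleton_eq_iff)
  ultimately show ?thesis by simp
qed

lemma two_subset_of_four: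
  assumes "e \<subseteq> {p, q, r, s}" "card e = 2"
  shows "e = {p, q} \<or> e = {p, r} \<or> e = {p, s} \<or> e = {q, r} \<or> e = {q, s} \<or> e = {r, s}"
proof -
  obtain i j where ij: "e = {i, j}" "i \<noteq> j" using assms(2) by (auto simp: card_2_iff)
  have "i \<in> {p, q, r, s}" "j \<in> {p, q, r, s}" using assms(1) ij by auto
  thus ?thesis using ij by (auto simp: insert_commute)
qed

lemma sum_ge_card_minus:
  fixes h :: "'b \<Rightarrow> real"
  assumes finF: "finite F" and finZ: "finite Z"
    and one: "\<And>e. e \<in> F \<Longrightarrow> e \<notin> Z \<Longrightarrow> 1 \<le> h e" and nonneg: "\<And>e. 0 \<le> h e"
  shows "real (card F) - real (card Z) \<le> (\<Sum>e\<in>F. h e)"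
proof -
  have "real (card F) - real (card Z) \<le> real (card (F - Z))"
    using diff_card_le_card_Diff[OF finZ, of F] by linarith
  also have "\<dots> = (\<Sum>e\<in>F - Z. 1)" by simp
  also have "\<dots> \<le> (\<Sum>e\<in>F - Z. h e)" using one by (intro sum_mono) auto
  also have "\<dots> \<le> (\<Sum>e\<in>F. h e)" using finF nonneg by (intro sum_mono2) auto
  finally show ?thesis .
qed

lemma four_cycle_delete_edge:
  assumes c: "four_cycle a b c d V E"
  shows "1 \<le> num_matchings E (V - {a, b})"
proof -
  have "V - {a, b} = {c, d}" "{c, d} \<in> E" using c by (auto simp: four_cycle_def)
  thus ?thesis using num_matchings_edge graph_finite_edges[OF four_cycle_graph[OF c]] by simp
qed

lemma four_cycle_join_adjacent_deletions:
  assumes c: "four_cycle a b c d V1 E1" and x: "x \<notin> V1" and y: "y \<notin> V1" and xy: "x \<noteq> y"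
    and e: "e \<in> pairs {x, y, c, d}" "e \<notin> {{x, d}, {y, c}}"
  shows "1 \<le> num_matchings (E1 \<union> {{x, y}} \<union> {{a, x}, {b, y}}) (V1 \<union> {x, y} - e)"
proof -
  have d: "distinct [a, b, c, d]" and V: "V1 = {a, b, c, d}" using c by (auto simp: four_cycle_def)
  interpret edge_join V1 E1 x y a b using four_cycle_graph[OF c] x y xy d V by unfold_locales auto
  note r1 = four_cycle_rotate[OF c]
  note r2 = four_cycle_rotate[OF r1]
  note r3 = four_cycle_rotate[OF r2]
  have "e = {x, y} \<or> e = {x, c} \<or> e = {x, d} \<or> e = {y, c} \<or> e = {y, d} \<or> e = {c, d}"
    using e(1) by (intro two_subset_of_four) (auto simp: pairs_def)
  moreover have "1 \<le> num_matchings E' (V' - {x, y})"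
    using num_matchings_without_xy four_cycle_num_matchings[OF c] by simp
  moreover have "1 \<le> num_matchings E' (V' - {x, c})"
  proof -
    have "1 \<le> num_matchings E1 (V1 - {c, b})" using four_cycle_delete_edge[OF r1] by (simp add: insert_commute)
    also have "\<dots> \<le> num_matchings E' (V' - {x, c})" by (rule num_matchings_without_x) (use V d in auto)
    finally show ?thesis .
  qed
  moreover have "1 \<le> num_matchings E' (V' - {y, d})"
  proof -
    have "1 \<le> num_matchings E1 (V1 - {d, a})" using four_cycle_delete_edge[OF r3] by (simp add: insert_commute)
    also have "\<dots> \<le> num_matchings E' (V' - {y, d})" by (rule num_matchings_without_y) (use V d in auto)
    finally show ?thesis .
  qed
  moreover have "1 \<le> num_matchings E' (V' - {c, d})"
  proof -
    have "{c, d} \<subseteq> V1 - {a, b}" using V d by auto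
    thus ?thesis using num_matchings_without_old[of "{c, d}"] four_cycle_delete_edge[OF r2] by linarith
  qed
  ultimately show ?thesis using e(2) by auto
qed

lemma four_cycle_join_opposite_deletions:
  assumes c: "four_cycle a b c d V1 E1" and x: "x \<notin> V1" and y: "y \<notin> V1" and xy: "x \<noteq> y"
    and e: "e \<in> pairs {x, y, b, d}"
  shows "1 \<le> num_matchings (E1 \<union> {{x, y}} \<union> {{a, x}, {c, y}}) (V1 \<union> {x, y} - e)"
proof -
  have d: "distinct [a, b, c, d]" and V: "V1 = {a, b, c, d}" using c by (auto simp: four_cycle_def)
  interpret edge_join V1 E1 x y a c using four_cycle_graph[OF c] x y xy d V by unfold_locales auto
  note r1 = four_cycle_rotate[OF c]
  note r2 = four_cycle_rotate[OF r1]
  note r3 = four_cycle_rotate[OF r2]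
  have "e = {x, y} \<or> e = {x, b} \<or> e = {x, d} \<or> e = {y, b} \<or> e = {y, d} \<or> e = {b, d}"
    using e by (intro two_subset_of_four) (auto simp: pairs_def)
  moreover have "1 \<le> num_matchings E' (V' - {x, y})"
    using num_matchings_without_xy four_cycle_num_matchings[OF c] by simp
  moreover have "1 \<le> num_matchings E' (V' - {x, b})"
  proof -
    have "1 \<le> num_matchings E1 (V1 - {b, c})" using four_cycle_delete_edge[OF r1] by (simp add: insert_commute)
    also have "\<dots> \<le> num_matchings E' (V' - {x, b})" by (rule num_matchings_without_x) (use V d in auto)
    finally show ?thesis .
  qed
  moreover have "1 \<le> num_matchings E' (V' - {x, d})"
  proof -
    have "1 \<le> num_matchings E1 (V1 - {d, c})" using four_cycle_delete_edge[OF r2] by (simp add: insert_commute)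
    also have "\<dots> \<le> num_matchings E' (V' - {x, d})" by (rule num_matchings_without_x) (use V d in auto)
    finally show ?thesis .
  qed
  moreover have "1 \<le> num_matchings E' (V' - {y, b})"
  proof -
    have "1 \<le> num_matchings E1 (V1 - {b, a})" using four_cycle_delete_edge[OF c] by (simp add: insert_commute)
    also have "\<dots> \<le> num_matchings E' (V' - {y, b})" by (rule num_matchings_without_y) (use V d in auto)
    finally show ?thesis .
  qed
  moreover have "1 \<le> num_matchings E' (V' - {y, d})"
  proof -
    have "1 \<le> num_matchings E1 (V1 - {d, a})" using four_cycle_delete_edge[OF r3] by (simp add: insert_commute)
    also have "\<dots> \<le> num_matchings E' (V' - {y, d})" by (rule num_matchings_without_y) (use V d in auto)
    finally show ?thesis .
  qed
  moreover have "1 \<le> num_matchings E' (V' - {b, d})"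
  proof -
    have empty: "V1 - {b, d} - {a, c} = {}" using V by auto
    have "1 \<le> num_matchings E1 (V1 - {b, d} - {a, c})"
      unfolding empty by (rule num_matchings_empty[OF graph_finite_edges[OF graph]])
    moreover have "{b, d} \<subseteq> V1 - {a, c}" using V d by auto
    ultimately show ?thesis using num_matchings_without_old[of "{b, d}"] by linarith
  qed
  ultimately show ?thesis by auto
qed

text \<open>Hence the potential of an edge glued to a 4-cycle is at least
  \<open>2 * growth ^ card F\<close>: with adjacent corners there are 3 perfect matchings and
  at most two unmatchable deletions, with opposite corners 2 perfect matchings
  and no unmatchable deletion.\<close>

lemma four_cycle_join_adjacent:
  assumes c: "four_cycle a b c d V1 E1" and x: "x \<notin> V1" and y: "y \<notin> V1" and xy: "x \<noteq> y"
    and F: "F \<subseteq> pairs {x, y, c, d}"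
  shows "2 * growth ^ card F \<le> potential (V1 \<union> {x, y}) (E1 \<union> {{x, y}} \<union> {{a, x}, {b, y}}) F"
proof -
  interpret edge_join V1 E1 x y a b
    using four_cycle_graph[OF c] x y xy c by unfold_locales (auto simp: four_cycle_def)
  have finF: "finite F" using finite_subset[OF F finite_pairs] by simp
  have cardF: "card F \<le> 6" by (rule card_pairs_le_6[OF _ _ F]) (auto simp: card_insert_if)
  have "3 \<le> num_matchings E' V'"
    using four_cycle_num_matchings[OF c] four_cycle_delete_edge[OF c] num_matchings_join by linarith
  moreover have "1 \<le> real (num_matchings E' (V' - e))" if "e \<in> F" "e \<notin> {{x, d}, {y, c}}" for e
    using four_cycle_join_adjacent_deletions[OF c x y xy, of e] that F by auto
  hence "real (card F) - real (card {{x, d}, {y, c}}) \<le> (\<Sum>e\<in>F. real (num_matchings E' (V' - e)))"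
    by (intro sum_ge_card_minus[OF finF]) auto
  moreover have "real (card {{x, d}, {y, c}}) \<le> 2" by (simp add: card_insert_if)
  moreover have "0 \<le> (\<Sum>e\<in>F. real (num_matchings E' (V' - e)))" by (simp add: sum_nonneg)
  ultimately have "max 3 (real (card F) + 1) \<le> potential V' E' F"
    unfolding potential_def by simp
  thus ?thesis using growth_cycle_adjacent[OF cardF] by linarith
qed

lemma four_cycle_join_opposite:
  assumes c: "four_cycle a b c d V1 E1" and x: "x \<notin> V1" and y: "y \<notin> V1" and xy: "x \<noteq> y"
    and F: "F \<subseteq> pairs {x, y, b, d}"
  shows "2 * growth ^ card F \<le> potential (V1 \<union> {x, y}) (E1 \<union> {{x, y}} \<union> {{a, x}, {c, y}}) F"
proof -
  interpret edge_join V1 E1 x y a c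
    using four_cycle_graph[OF c] x y xy c by unfold_locales (auto simp: four_cycle_def)
  have finF: "finite F" using finite_subset[OF F finite_pairs] by simp
  have cardF: "card F \<le> 6" by (rule card_pairs_le_6[OF _ _ F]) (auto simp: card_insert_if)
  have "2 \<le> num_matchings E' V'"
    using four_cycle_num_matchings[OF c] num_matchings_join by linarith
  moreover have "1 \<le> real (num_matchings E' (V' - e))" if "e \<in> F" for e
    using four_cycle_join_opposite_deletions[OF c x y xy, of e] that F by auto
  hence "real (card F) - real (card ({} :: 'a set set)) \<le> (\<Sum>e\<in>F. real (num_matchings E' (V' - e)))"
    by (intro sum_ge_card_minus[OF finF]) auto
  ultimately have "2 + real (card F) \<le> potential V' E' F"
    unfolding potential_def by simp
  thus ?thesis using growth_cycle_opposite[OF cardF] by linarith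
qed

definition strong_bound :: "'a set \<Rightarrow> 'a set set \<Rightarrow> bool" where
  "strong_bound V E \<longleftrightarrow>
     (\<forall>F. F \<subseteq> pairs (corners V E) \<longrightarrow> growth ^ card F * bound (card V) \<le> potential V E F)"

definition net_invariant :: "'a set \<Rightarrow> 'a set set \<Rightarrow> bool" where
  "net_invariant V E \<longleftrightarrow> graph V E \<and> 4 \<le> card V \<and> card (corners V E) \<le> 4 \<and>
     (if card V = 4 then \<exists>a b c d. four_cycle a b c d V E else strong_bound V E)"

lemma strong_bound_num_matchings:
  assumes "strong_bound V E"
  shows "bound (card V) \<le> real (num_matchings E V)"
proof -
  have "growth ^ card ({} :: 'a set set) * bound (card V) \<le> potential V E {}"
    using assms unfolding strong_bound_def by (metis empty_subsetI)
  thus ?thesis by (simp add: potential_def)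
qed

lemma net_invariant_bound:
  assumes "net_invariant V E"
  shows "bound (card V) \<le> real (num_matchings E V)"
proof (cases "card V = 4")
  case True
  then obtain a b c d where "four_cycle a b c d V E" using assms by (auto simp: net_invariant_def)
  thus ?thesis using four_cycle_num_matchings bound_4 True by fastforce
next
  case False
  hence "strong_bound V E" using assms by (simp add: net_invariant_def)
  thus ?thesis by (rule strong_bound_num_matchings)
qed

text \<open>With at most four corners there are at most six corner pairs, so a
  matching count of \<open>2^(2/3)\<close> times the bound already gives the strong bound.\<close>

lemma strong_bound_from_matchings:
  assumes "graph V E" "card (corners V E) \<le> 4"
    and "2 powr (2/3) * bound (card V) \<le> real (num_matchings E V)"
  shows "strong_bound V E"
  unfolding strong_bound_def
proof (intro allI impI)
  fix F assume "F \<subseteq> pairs (corners V E)"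
  hence "card F \<le> 6" using card_pairs_le_6 finite_corners assms(1,2) by blast
  hence "growth ^ card F * bound (card V) \<le> 2 powr (2/3) * bound (card V)"
    using growth_power_le bound_pos by (simp add: less_imp_le)
  also have "\<dots> \<le> potential V E F" using assms(3) num_matchings_le_potential order_trans by blast
  finally show "growth ^ card F * bound (card V) \<le> potential V E F" .
qed

lemma card_corners_le_4:
  assumes "finite A" "finite B" "card A \<le> 2" "card B \<le> 2" "C \<subseteq> A \<union> B"
  shows "card C \<le> 4"
  using card_mono[OF _ assms(5)] card_Un_le[of A B] assms(1-4) by simp

lemma net_invariant_cycle4:
  assumes "distinct [a, b, c, d]"
  shows "net_invariant {a, b, c, d} {{a, b}, {b, c}, {c, d}, {d, a}}"
proof -
  have cyc: "four_cycle a b c d {a, b, c, d} {{a, b}, {b, c}, {c, d}, {d, a}}"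
    using assms by (simp add: four_cycle_def)
  have "card (corners {a, b, c, d} {{a, b}, {b, c}, {c, d}, {d, a}}) \<le> card {a, b, c, d}"
    by (rule card_mono[OF _ corners_subset]) simp
  thus ?thesis using cyc four_cycle_card[OF cyc] four_cycle_graph[OF cyc]
    unfolding net_invariant_def by auto
qed

text \<open>Gluing two twisted nets: the matching counts multiply, and
  \<open>bound n1 * bound n2 = 2^(2/3) * bound (n1 + n2)\<close>.\<close>

lemma net_invariant_join_net:
  assumes inv1: "net_invariant V1 E1" and inv2: "net_invariant V2 E2" and disj: "V1 \<inter> V2 = {}"
    and u: "corner V1 E1 u" and u': "corner V1 E1 u'" and uu': "u \<noteq> u'"
    and v: "corner V2 E2 v" and v': "corner V2 E2 v'" and vv': "v \<noteq> v'"
  shows "net_invariant (V1 \<union> V2) (E1 \<union> E2 \<union> {{u, v}, {u', v'}})"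
proof -
  let ?V = "V1 \<union> V2" and ?E = "E1 \<union> E2 \<union> {{u, v}, {u', v'}}"
  have g1: "graph V1 E1" and g2: "graph V2 E2" and c1: "card (corners V1 E1) \<le> 4"
    and c2: "card (corners V2 E2) \<le> 4" and n1: "4 \<le> card V1" and n2: "4 \<le> card V2"
    using inv1 inv2 by (auto simp: net_invariant_def)
  have in_V: "u \<in> V1" "u' \<in> V1" "v \<in> V2" "v' \<in> V2" using u u' v v' by (auto simp: corner_def)
  have g: "graph ?V ?E" using graph_join_net[OF g1 g2 disj in_V] .
  have card_V: "card ?V = card V1 + card V2"
    using g1 g2 disj by (simp add: graph_def card_Un_disjoint)
  have in_C: "u \<in> corners V1 E1" "u' \<in> corners V1 E1" "v \<in> corners V2 E2" "v' \<in> corners V2 E2"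
    using u u' v v' by (auto simp: corners_def)
  have corners: "card (corners ?V ?E) \<le> 4"
    by (rule card_corners_le_4[OF _ _ card_diff_two_corners card_diff_two_corners
          corners_join_net[OF g1 g2 disj u u' v v']])
      (use finite_corners g1 g2 c1 c2 in_C uu' vv' in auto)
  have "bound (card V1) * bound (card V2) \<le> real (num_matchings E1 V1) * real (num_matchings E2 V2)"
    using net_invariant_bound[OF inv1] net_invariant_bound[OF inv2] bound_pos
    by (intro mult_mono) (auto intro: less_imp_le)
  also have "\<dots> \<le> real (num_matchings ?E ?V)"
  proof -
    have "num_matchings E1 V1 * num_matchings E2 V2 \<le> num_matchings ?E ?V"
      by (rule num_matchings_disjoint_union[OF graph_finite_edges[OF g] _ _ disj
            graph_no_empty_edge[OF g1] graph_no_empty_edge[OF g2]]) auto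
    thus ?thesis by (metis of_nat_le_iff of_nat_mult)
  qed
  finally have "2 powr (2/3) * bound (card ?V) \<le> real (num_matchings ?E ?V)"
    by (simp add: bound_add card_V)
  hence "strong_bound ?V ?E" using strong_bound_from_matchings[OF g corners] by blast
  thus ?thesis using g corners n1 n2 card_V by (simp add: net_invariant_def)
qed

lemma strong_bound_join_edge_cycle:
  assumes c: "four_cycle a b c d V1 E1" and x: "x \<notin> V1" and y: "y \<notin> V1" and xy: "x \<noteq> y"
    and u: "u \<in> V1" and u': "u' \<in> V1" and uu': "u \<noteq> u'"
    and corners: "corners (V1 \<union> {x, y}) (E1 \<union> {{x, y}} \<union> {{u, x}, {u', y}}) \<subseteq> {x, y} \<union> (V1 - {u, u'})"
  shows "strong_bound (V1 \<union> {x, y}) (E1 \<union> {{x, y}} \<union> {{u, x}, {u', y}})"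
  unfolding strong_bound_def
proof (intro allI impI)
  let ?V = "V1 \<union> {x, y}" and ?E = "E1 \<union> {{x, y}} \<union> {{u, x}, {u', y}}"
  fix F assume F: "F \<subseteq> pairs (corners ?V ?E)"
  obtain a' b' c' d' where c': "four_cycle a' b' c' d' V1 E1" and ua: "u = a'"
    and u'bc: "u' = b' \<or> u' = c'"
    using four_cycle_wlog[OF c u u' uu'] by blast
  have V1: "V1 = {a', b', c', d'}" and d: "distinct [a', b', c', d']"
    using c' by (auto simp: four_cycle_def)
  have "card ?V = 6"
    using four_cycle_card[OF c] four_cycle_graph[OF c] x y xy by (simp add: graph_def card_insert_if)
  hence "bound (card ?V) = 2" using bound_6 by simp
  moreover have "2 * growth ^ card F \<le> potential ?V ?E F"
    using u'bc
  proof
    assume "u' = b'"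
    hence "{x, y} \<union> (V1 - {u, u'}) = {x, y, c', d'}" using ua V1 d by auto
    hence "F \<subseteq> pairs {x, y, c', d'}" using order_trans[OF F pairs_mono[OF corners]] by simp
    thus ?thesis using four_cycle_join_adjacent[OF c' x y xy] ua \<open>u' = b'\<close> by simp
  next
    assume "u' = c'"
    hence "{x, y} \<union> (V1 - {u, u'}) = {x, y, b', d'}" using ua V1 d by auto
    hence "F \<subseteq> pairs {x, y, b', d'}" using order_trans[OF F pairs_mono[OF corners]] by simp
    thus ?thesis using four_cycle_join_opposite[OF c' x y xy] ua \<open>u' = c'\<close> by simp
  qed
  ultimately show "growth ^ card F * bound (card ?V) \<le> potential ?V ?E F" by (simp add: mult.commute)
qed

text \<open>Gluing an edge to a larger net: by the potential transfer, each corner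
  pair \<open>xy \<in> F\<close> is paid for by an extra matching count of the old graph, and
  otherwise the old strong bound is applied to one more pair.\<close>

lemma strong_bound_join_edge_large:
  assumes join: "edge_join V1 E1 x y u u'" and strong: "strong_bound V1 E1"
    and u_corner: "u \<in> corners V1 E1" and u'_corner: "u' \<in> corners V1 E1"
    and corners: "corners (V1 \<union> {x, y}) (E1 \<union> {{x, y}} \<union> {{u, x}, {u', y}})
                    \<subseteq> {x, y} \<union> (corners V1 E1 - {u, u'})"
    and c4: "card (corners (V1 \<union> {x, y}) (E1 \<union> {{x, y}} \<union> {{u, x}, {u', y}})) \<le> 4"
  shows "strong_bound (V1 \<union> {x, y}) (E1 \<union> {{x, y}} \<union> {{u, x}, {u', y}})"
  unfolding strong_bound_def
proof (intro allI impI)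
  interpret edge_join V1 E1 x y u u' by (rule join)
  fix F assume F: "F \<subseteq> pairs (corners V' E')"
  have D: "corners V1 E1 - {u, u'} \<subseteq> V1 - {u, u'}" using corners_subset[of V1 E1] by blast
  have fin_corners: "finite (corners V' E')"
    using finite_corners[OF graph_join_edge[OF graph x y xy u u']] .
  have finF: "finite F" using finite_subset[OF F finite_pairs[OF fin_corners]] .
  have cardF: "card F \<le> 6" using card_pairs_le_6[OF fin_corners c4 F] .
  obtain G where G: "G \<subseteq> pairs ({u, u'} \<union> (corners V1 E1 - {u, u'}))"
    "card G = card (F - {{x, y}}) + 1"
    "potential V1 E1 G + (if {x, y} \<in> F then real (num_matchings E1 V1) else 0) \<le> potential V' E' F"
    using potential_transfer[OF D order_trans[OF F pairs_mono[OF corners]]] by blast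
  have "{u, u'} \<union> (corners V1 E1 - {u, u'}) = corners V1 E1" using u_corner u'_corner by blast
  hence IG: "growth ^ card G * bound (card V1) \<le> potential V1 E1 G"
    using strong G(1) unfolding strong_bound_def by auto
  have step: "bound (card V') = growth * bound (card V1)"
    using bound_step graph x y xy by (simp add: graph_def card_insert_if)
  show "growth ^ card F * bound (card V') \<le> potential V' E' F"
  proof (cases "{x, y} \<in> F")
    case True
    moreover have "card F > 0" using True finF card_gt_0_iff by blast
    ultimately have "card G = card F" using G(2) finF by (simp add: card_Diff_singleton)
    have "growth ^ (card F + 1) * bound (card V1) \<le> (1 + growth ^ card F) * bound (card V1)"
      using growth_step[OF cardF] bound_pos by (intro mult_right_mono) (auto intro: less_imp_le)
    also have "\<dots> \<le> real (num_matchings E1 V1) + potential V1 E1 G"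
      using strong_bound_num_matchings[OF strong] IG \<open>card G = card F\<close> by (simp add: algebra_simps)
    also have "\<dots> \<le> potential V' E' F" using G(3) True by simp
    finally show ?thesis using step by (simp add: mult.assoc mult.commute mult.left_commute)
  next
    case False
    hence "card G = card F + 1" using G(2) by simp
    hence "growth ^ (card F + 1) * bound (card V1) \<le> potential V1 E1 G" using IG by simp
    also have "\<dots> \<le> potential V' E' F" using G(3) False by simp
    finally show ?thesis using step by (simp add: mult.assoc mult.commute mult.left_commute)
  qed
qed

lemma net_invariant_join_edge:
  assumes inv: "net_invariant V1 E1" and x: "x \<notin> V1" and y: "y \<notin> V1" and xy: "x \<noteq> y"
    and u: "corner V1 E1 u" and u': "corner V1 E1 u'" and uu': "u \<noteq> u'"
  shows "net_invariant (V1 \<union> {x, y}) (E1 \<union> {{x, y}} \<union> {{u, x}, {u', y}})"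
proof -
  let ?V = "V1 \<union> {x, y}" and ?E = "E1 \<union> {{x, y}} \<union> {{u, x}, {u', y}}"
  have g1: "graph V1 E1" and c1: "card (corners V1 E1) \<le> 4" and n1: "4 \<le> card V1"
    using inv by (auto simp: net_invariant_def)
  have in_V: "u \<in> V1" "u' \<in> V1" using u u' by (auto simp: corner_def)
  have in_C: "u \<in> corners V1 E1" "u' \<in> corners V1 E1" using u u' by (auto simp: corners_def)
  have join: "edge_join V1 E1 x y u u'" using g1 x y xy in_V uu' by unfold_locales
  have g: "graph ?V ?E" using graph_join_edge[OF g1 x y xy in_V] .
  have card_V: "card ?V = card V1 + 2" using g1 x y xy by (simp add: graph_def card_insert_if)
  have new_corners: "corners ?V ?E \<subseteq> {x, y} \<union> (corners V1 E1 - {u, u'})"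
    by (rule corners_join_edge[OF g1 x y xy u u'])
  have corners: "card (corners ?V ?E) \<le> 4"
    by (rule card_corners_le_4[OF _ _ _ card_diff_two_corners new_corners])
      (use finite_corners g1 c1 in_C uu' in \<open>auto simp: card_insert_if\<close>)
  have "strong_bound ?V ?E"
  proof (cases "card V1 = 4")
    case True
    then obtain a b c d where cycle: "four_cycle a b c d V1 E1" using inv by (auto simp: net_invariant_def)
    have "corners ?V ?E \<subseteq> {x, y} \<union> (V1 - {u, u'})" using new_corners corners_subset[of V1 E1] by blast
    thus ?thesis by (rule strong_bound_join_edge_cycle[OF cycle x y xy in_V uu'])
  next
    case False
    hence "strong_bound V1 E1" using inv by (simp add: net_invariant_def)
    thus ?thesis
      using strong_bound_join_edge_large[OF join _ in_C new_corners corners] by blast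
  qed
  thus ?thesis using g corners n1 card_V by (simp add: net_invariant_def)
qed

lemma net_invariant_twisted_net: "twisted_net V E \<Longrightarrow> net_invariant V E"
proof (induction rule: twisted_net.induct)
  case (cycle4 a b c d)
  thus ?case by (rule net_invariant_cycle4)
next
  case (join_net V1 E1 V2 E2 u u' v v')
  thus ?case by (intro net_invariant_join_net)
next
  case (join_edge V1 E1 x y u u')
  thus ?case by (intro net_invariant_join_edge)
qed

lemma perfect_matchings_eq:
  assumes "graph V E"
  shows "{M. perfect_matching V E M} = matchings_on E V"
proof -
  have "\<Union>M \<subseteq> V" if "M \<subseteq> E" for M using assms that unfolding graph_def by blast
  thus ?thesis unfolding matchings_on_def perfect_matching_def by blast
qed

theorem mainTheorem16:
  assumes "twisted_net V E"
  shows "real (card {M. perfect_matching V E M}) \<ge> 2 powr (real (card V) / 18 + 2 / 3)"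
proof -
  have inv: "net_invariant V E" using net_invariant_twisted_net[OF assms] .
  hence "graph V E" by (simp add: net_invariant_def)
  hence "card {M. perfect_matching V E M} = num_matchings E V"
    by (simp add: perfect_matchings_eq num_matchings_def)
  thus ?thesis using net_invariant_bound[OF inv] by (simp add: bound_def)
qed

end
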